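(* Let a binary game be given as described in the context. Suppose compensation payments incur no cost in both problems (S) and (P), i.e. $G\equiv 0$. Let $(x_i^\circ,y_i^\circ)_{i\in I}$ be an optimal solution of the social-planner problem (S) and $(x_i^*,y_i^* )_{i\in I}$ the $(x,y)$-part of an optimal solution of problem (P). Then $F((x_i^\circ,y_i^\circ)_{i\in I})\le F((x_i^*,y_i^* )_{i\in I})$.
   Context: Binary game: players $i\in I=\{1,\dots,n\}$. Player $i$ chooses $x_i\in\{0,1\}$ and $y_i\in\mathbb{R}^m$ and solves $\min f_i(x_i,y_i,y_{-i})$ subject to $g_i(x_i,y_i)\le 0$, with $g_i:\{0,1\}\times\mathbb{R}^m\to\mathbb{R}^k$, $y_{-i}=(y_j)_{j\ne i}$. $F$ is a function of $(x_i,y_i)_{i\in I}$ and $G$ a function of compensations $(\zeta_i)_{i\in I}$, $\zeta_i\ge0$. Social-planner problem (S): first $(x_i^\circ,y_i^\circ)_{i}$ minimizes $F((x_i,y_i)_i)$ subject to $g_i(x_i,y_i)\le0$, $x_i\in\{0,1\}$ for all $i$; then $(\zeta_i^\circ)_i$ minimizes $G$ subject to $f_i(x_i^\circ,y_i^\circ,y_{-i}^\circ)-\zeta_i\le f_i(x_i^\times,y_i^\times,y_{-i}^\circ)$ for all $i$ and all $(x_i^\times,y_i^\times)\in\arg\min\{f_i(x,y,y_{-i}^\circ): x\in\{0,1\},\ g_i(x,y)\le0\}$; the objective value of (S) is $F((x_i^\circ,y_i^\circ)_i)+G((\zeta_i^\circ)_i)$. Problem (P): with a sufficiently large constant $\widetilde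 K>0$, minimize $F((x_i,y_i)_{i})+G((\zeta_i^{(1)},\zeta_i^{(0)})_{i})$ over $x_i\in\{0,1\}$, $y_i,\widetilde y_i^{(1)},\widetilde y_i^{(0)}\in\mathbb{R}^m$, $\widetilde\lambda_i^{(b)}\in\mathbb{R}^k_+$, $\kappa_i^{(b)},\zeta_i^{(b)}\ge0$, subject to, for all $i$, $b\in\{0,1\}$: $\nabla_{y_i} f_i(b,\widetilde y_i^{(b)},y_{-i})+(\widetilde\lambda_i^{(b)})^T\nabla_{y_i} g_i(b,\widetilde y_i^{(b)})=0$; $0\le -g_i(b,\widetilde y_i^{(b)})\perp\widetilde\lambda_i^{(b)}\ge0$; $f_i(1,\widetilde y_i^{(1)},y_{-i})+\kappa_i^{(1)}-\zeta_i^{(1)}-\kappa_i^{(0)}+\zeta_i^{(0)}=f_i(0,\widetilde y_i^{(0)},y_{-i})$; $\kappa_i^{(1)}+\zeta_i^{(1)}\le x_i\widetilde K$; $\kappa_i^{(0)}+\zeta_i^{(0)}\le(1-x_i)\widetilde K$; $\widetilde y_i^{(0)}-x_i\widetilde K\le y_i\le\widetilde y_i^{(0)}+x_i\widetilde K$; $\widetilde y_i^{(1)}-(1-x_i)\widetilde K\le y_i\le\widetilde y_i^{(1)}+(1-x_i)\widetilde K$. *)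

theory Defs
  imports "HOL-Analysis.Analysis"
begin

text \<open>
Objectives  f :: 'i => real => real^'m => ('i => real^'m) => real,
  where f i b v ys stands for f_i(b, v, y_{-i}); the profile y_{-i} is encoded
  as the full profile with the i-th entry overwritten by 0 (see minus_i).
\<close>

definition minus_i :: "('i \<Rightarrow> 'v::zero) \<Rightarrow> 'i \<Rightarrow> ('i \<Rightarrow> 'v)" where
  "minus_i y i = y(i := 0)"

definition grad :: "('a::real_inner \<Rightarrow> real) \<Rightarrow> 'a \<Rightarrow> 'a" where
  "grad h v = (SOME D. GDERIV h v :> D)"

definition ind_feasible :: "('i \<Rightarrow> real \<Rightarrow> real^'m \<Rightarrow> real^'k) \<Rightarrow> 'i \<Rightarrow> real \<Rightarrow> real^'m \<Rightarrow> bool" where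
  "ind_feasible g i xi yi \<longleftrightarrow> xi \<in> {0, 1} \<and> (\<forall>l. g i xi yi $ l \<le> 0)"

definition best_response ::
  "('i \<Rightarrow> real \<Rightarrow> real^'m \<Rightarrow> ('i \<Rightarrow> real^'m) \<Rightarrow> real) \<Rightarrow> ('i \<Rightarrow> real \<Rightarrow> real^'m \<Rightarrow> real^'k)
   \<Rightarrow> 'i \<Rightarrow> ('i \<Rightarrow> real^'m) \<Rightarrow> real \<Rightarrow> real^'m \<Rightarrow> bool" where
  "best_response f g i y xi yi \<longleftrightarrow> ind_feasible g i xi yi \<and>
     (\<forall>x' y'. ind_feasible g i x' y' \<longrightarrow> f i xi yi (minus_i y i) \<le> f i x' y' (minus_i y i))"

definition S_optimal ::
  "(('i \<Rightarrow> real) \<Rightarrow> ('i \<Rightarrow> real^'m) \<Rightarrow> real) \<Rightarrow> (('i \<Rightarrow> real) \<Rightarrow> real)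
   \<Rightarrow> ('i \<Rightarrow> real \<Rightarrow> real^'m \<Rightarrow> ('i \<Rightarrow> real^'m) \<Rightarrow> real) \<Rightarrow> ('i \<Rightarrow> real \<Rightarrow> real^'m \<Rightarrow> real^'k)
   \<Rightarrow> ('i \<Rightarrow> real) \<Rightarrow> ('i \<Rightarrow> real^'m) \<Rightarrow> ('i \<Rightarrow> real) \<Rightarrow> bool" where
  "S_optimal F G f g x y \<zeta> \<longleftrightarrow>
     (\<forall>i. ind_feasible g i (x i) (y i)) \<and>
     (\<forall>x' y'. (\<forall>i. ind_feasible g i (x' i) (y' i)) \<longrightarrow> F x y \<le> F x' y') \<and>
     (let comp_ok = (\<lambda>z. (\<forall>i. z i \<ge> 0) \<and>
            (\<forall>i xc yc. best_response f g i y xc yc \<longrightarrow>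
               f i (x i) (y i) (minus_i y i) - z i \<le> f i xc yc (minus_i y i)))
      in comp_ok \<zeta> \<and> (\<forall>z. comp_ok z \<longrightarrow> G \<zeta> \<le> G z))"

text \<open>Quantities indexed by b in {0,1} are
  functions of a real argument b; only b = 0 and b = 1 matter.
  yt i b = tilde y_i^(b), lam i b = tilde lambda_i^(b), kap i b = kappa_i^(b),
  zet i b = zeta_i^(b).\<close>
definition P_feasible ::
  "real \<Rightarrow> ('i \<Rightarrow> real \<Rightarrow> real^'m \<Rightarrow> ('i \<Rightarrow> real^'m) \<Rightarrow> real) \<Rightarrow> ('i \<Rightarrow> real \<Rightarrow> real^'m \<Rightarrow> real^'k)
   \<Rightarrow> ('i \<Rightarrow> real) \<Rightarrow> ('i \<Rightarrow> real^'m) \<Rightarrow> ('i \<Rightarrow> real \<Rightarrow> real^'m) \<Rightarrow> ('i \<Rightarrow> real \<Rightarrow> real^'k)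
   \<Rightarrow> ('i \<Rightarrow> real \<Rightarrow> real) \<Rightarrow> ('i \<Rightarrow> real \<Rightarrow> real) \<Rightarrow> bool" where
  "P_feasible K f g x y yt lam kap zet \<longleftrightarrow>
     (\<forall>i. x i \<in> {0, 1} \<and>
       (\<forall>b\<in>{0, 1}.
          (\<forall>l. lam i b $ l \<ge> 0) \<and> kap i b \<ge> 0 \<and> zet i b \<ge> 0 \<and>
          grad (\<lambda>v. f i b v (minus_i y i)) (yt i b)
            + (\<Sum>l\<in>UNIV. (lam i b $ l) *\<^sub>R grad (\<lambda>v. g i b v $ l) (yt i b)) = 0 \<and>
          (\<forall>l. 0 \<le> - (g i b (yt i b) $ l) \<and> (- (g i b (yt i b) $ l)) * (lam i b $ l) = 0)) \<and>
       f i 1 (yt i 1) (minus_i y i) + kap i 1 - zet i 1 - kap i 0 + zet i 0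
         = f i 0 (yt i 0) (minus_i y i) \<and>
       kap i 1 + zet i 1 \<le> x i * K \<and>
       kap i 0 + zet i 0 \<le> (1 - x i) * K \<and>
       (\<forall>j. yt i 0 $ j - x i * K \<le> y i $ j \<and> y i $ j \<le> yt i 0 $ j + x i * K) \<and>
       (\<forall>j. yt i 1 $ j - (1 - x i) * K \<le> y i $ j \<and> y i $ j \<le> yt i 1 $ j + (1 - x i) * K))"

definition P_optimal ::
  "real \<Rightarrow> (('i \<Rightarrow> real) \<Rightarrow> ('i \<Rightarrow> real^'m) \<Rightarrow> real) \<Rightarrow> (('i \<Rightarrow> real \<times> real) \<Rightarrow> real)
   \<Rightarrow> ('i \<Rightarrow> real \<Rightarrow> real^'m \<Rightarrow> ('i \<Rightarrow> real^'m) \<Rightarrow> real) \<Rightarrow> ('i \<Rightarrow> real \<Rightarrow> real^'m \<Rightarrow> real^'k)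
   \<Rightarrow> ('i \<Rightarrow> real) \<Rightarrow> ('i \<Rightarrow> real^'m) \<Rightarrow> ('i \<Rightarrow> real \<Rightarrow> real^'m) \<Rightarrow> ('i \<Rightarrow> real \<Rightarrow> real^'k)
   \<Rightarrow> ('i \<Rightarrow> real \<Rightarrow> real) \<Rightarrow> ('i \<Rightarrow> real \<Rightarrow> real) \<Rightarrow> bool" where
  "P_optimal K F G f g x y yt lam kap zet \<longleftrightarrow>
     P_feasible K f g x y yt lam kap zet \<and>
     (\<forall>x' y' yt' lam' kap' zet'. P_feasible K f g x' y' yt' lam' kap' zet' \<longrightarrow>
        F x y + G (\<lambda>i. (zet i 1, zet i 0)) \<le> F x' y' + G (\<lambda>i. (zet' i 1, zet' i 0)))"

end

theory Submission
  imports Defs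
begin

text \<open>Every feasible point of (P) is feasible for the first stage of (S): the big-M
  constraints with the active index b = x i pin y i to the KKT point yt i b, which
  satisfies g_i(b, yt i b) \<le> 0.  With G \<equiv> 0 the objective of (P) is F alone, so (P)
  minimises F over a subset of the feasible set of (S).\<close>

lemma vec_eq_of_box_zero:
  fixes u v :: "real^'n"
  assumes "\<forall>j. v $ j - 0 \<le> u $ j \<and> u $ j \<le> v $ j + 0"
  shows "u = v"
  using assms by (simp add: vec_eq_iff order_antisym)

lemma P_feasible_imp_ind_feasible:
  assumes "P_feasible K f g x y yt lam kap zet"
  shows "ind_feasible g i (x i) (y i)"
proof -
  from assms have x01: "x i \<in> {0, 1}"
    and yt_feasible: "\<forall>b\<in>{0::real, 1}. \<forall>l. 0 \<le> - (g i b (yt i b) $ l)"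
    and box0: "\<forall>j. yt i 0 $ j - x i * K \<le> y i $ j \<and> y i $ j \<le> yt i 0 $ j + x i * K"
    and box1: "\<forall>j. yt i 1 $ j - (1 - x i) * K \<le> y i $ j \<and> y i $ j \<le> yt i 1 $ j + (1 - x i) * K"
    unfolding P_feasible_def by blast+
  have "y i = yt i (x i)"
  proof (cases "x i = 0")
    case True
    then show ?thesis using box0 vec_eq_of_box_zero by simp
  next
    case False
    then have "x i = 1" using x01 by auto
    then show ?thesis using box1 vec_eq_of_box_zero by simp
  qed
  then show ?thesis using x01 yt_feasible unfolding ind_feasible_def by auto
qed

lemma S_optimal_le:
  assumes "S_optimal F G f g xo yo \<zeta>o" and "\<forall>i. ind_feasible g i (x i) (y i)"
  shows "F xo yo \<le> F x y"
  using assms unfolding S_optimal_def by blast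

theorem theorem6:
  fixes F :: "('i::finite \<Rightarrow> real) \<Rightarrow> ('i \<Rightarrow> real^'m) \<Rightarrow> real"
    and f :: "'i \<Rightarrow> real \<Rightarrow> real^'m \<Rightarrow> ('i \<Rightarrow> real^'m) \<Rightarrow> real"
    and g :: "'i \<Rightarrow> real \<Rightarrow> real^'m \<Rightarrow> real^'k"
    and K :: real
  assumes K_pos: "K > 0"
    and f_diff: "\<And>i b v ys. b \<in> {0, 1} \<Longrightarrow> (\<lambda>w. f i b w ys) differentiable (at v)"
    and g_diff: "\<And>i b v l. b \<in> {0, 1} \<Longrightarrow> (\<lambda>w. g i b w $ l) differentiable (at v)"
    and S_opt: "S_optimal F (\<lambda>_. 0) f g xo yo \<zeta>o"
    and P_opt: "P_optimal K F (\<lambda>_. 0) f g xs ys yt lam kap zet"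
  shows "F xo yo \<le> F xs ys"
proof -
  have "P_feasible K f g xs ys yt lam kap zet"
    using P_opt unfolding P_optimal_def by blast
  then have "\<forall>i. ind_feasible g i (xs i) (ys i)"
    by (blast intro: P_feasible_imp_ind_feasible)
  then show ?thesis using S_opt S_optimal_le by blast
qed

end
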